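(* Let $\alpha \in \mathbb{R}_{>0}$ with $\alpha \neq 1$, and let $M_\alpha = \{f(\alpha) \mid f(x) \in \mathbb{N}_0[x,x^{-1}]\}$ as an additive monoid. Then $M_\alpha$ is not atomic if and only if the additive monoid $(\mathbb{N}_0[\alpha],+) = \{f(\alpha) \mid f(x) \in \mathbb{N}_0[x]\}$ is antimatter or finitely generated.
   Context: $\mathbb{N}_0[x,x^{-1}]$ denotes the semiring of Laurent polynomials with coefficients in $\mathbb{N}_0$. For a reduced additive monoid, an atom is a nonzero element not expressible as a sum of two nonzero elements; the monoid is atomic if every nonzero element is a sum of atoms, and antimatter if it has no atoms. *)

theory Defs
  imports Complex_Main "HOL-Computational_Algebra.Polynomial"
begin

text \<open>Additive submonoids of an ambient commutative monoid are given by their carrier set.\<close>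

definition atom :: "'a::comm_monoid_add set \<Rightarrow> 'a \<Rightarrow> bool" where
  "atom M a \<longleftrightarrow> a \<in> M \<and> a \<noteq> 0 \<and>
     \<not> (\<exists>b c. b \<in> M \<and> c \<in> M \<and> b \<noteq> 0 \<and> c \<noteq> 0 \<and> a = b + c)"

definition atomic_monoid :: "'a::comm_monoid_add set \<Rightarrow> bool" where
  "atomic_monoid M \<longleftrightarrow>
     (\<forall>x\<in>M. x \<noteq> 0 \<longrightarrow> (\<exists>xs. (\<forall>a\<in>set xs. atom M a) \<and> sum_list xs = x))"

definition antimatter :: "'a::comm_monoid_add set \<Rightarrow> bool" where
  "antimatter M \<longleftrightarrow> \<not> (\<exists>a. atom M a)"

definition fin_generated :: "real set \<Rightarrow> bool" where
  "fin_generated M \<longleftrightarrow>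
     (\<exists>G. finite G \<and> G \<subseteq> M \<and> M = {\<Sum>g\<in>G. real (n g) * g | n :: real \<Rightarrow> nat. True})"

definition laurent_eval_monoid :: "real \<Rightarrow> real set" where
  "laurent_eval_monoid \<alpha> =
     {\<Sum>i\<in>S. real (c i) * \<alpha> powi i | (S :: int set) (c :: int \<Rightarrow> nat). finite S}"

definition poly_eval_monoid :: "real \<Rightarrow> real set" where
  "poly_eval_monoid \<alpha> = {poly (map_poly real p) \<alpha> | p :: nat poly. True}"

end

theory Submission
  imports Defs
begin

text \<open>
  Both monoids are generated by powers of \<alpha>: M_\<alpha> by all \<alpha>^k with k \<in> \<int>, and
  N_0[\<alpha>] by those with k \<ge> 0. Atoms of a generated monoid are generators, and
  multiplication by \<alpha>^k is an automorphism of M_\<alpha>, so either every power is an atom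
  of M_\<alpha> or none is: M_\<alpha> is atomic iff 1 is an atom.

  If 1 is not an atom, then 1 = b + c with b, c \<in> M_\<alpha> positive, so every power occurring
  in b or c is smaller than 1. For \<alpha> < 1 these powers have positive exponents, so 1 already
  splits in N_0[\<alpha>]; then so does every \<alpha>^j, and N_0[\<alpha>] is antimatter.
  For \<alpha> > 1 the exponents are negative, and multiplying by a large \<alpha>^N writes \<alpha>^N as
  a sum of lower powers, so N_0[\<alpha>] is generated by the \<alpha>^i with i < N.

  Conversely, if 1 is an atom of M_\<alpha>, it is an atom of the submonoid N_0[\<alpha>], and every
  \<alpha>^n, being an atom of M_\<alpha>, lies in every generating set of N_0[\<alpha>]; as the powers
  are pairwise distinct, N_0[\<alpha>] is neither antimatter nor finitely generated.
\<close>

section \<open>Additive monoids generated by a set\<close>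


definition monoid_gen :: "'a::monoid_add set \<Rightarrow> 'a set" where
  "monoid_gen S = sum_list ` lists S"

lemma monoid_gen_image: "monoid_gen (f ` A) = (\<lambda>xs. sum_list (map f xs)) ` lists A"
  by (simp add: monoid_gen_def lists_image image_image)

lemma zero_in_monoid_gen: "0 \<in> monoid_gen S"
  unfolding monoid_gen_def by (auto intro!: image_eqI[where x="[]"])

lemma add_in_monoid_gen: "x \<in> monoid_gen S \<Longrightarrow> y \<in> monoid_gen S \<Longrightarrow> x + y \<in> monoid_gen S"
  unfolding monoid_gen_def by (auto intro!: image_eqI[of _ _ "_ @ _"])

lemma sum_list_in_monoid_gen: "set xs \<subseteq> monoid_gen S \<Longrightarrow> sum_list xs \<in> monoid_gen S"
  by (induction xs) (auto intro: zero_in_monoid_gen add_in_monoid_gen)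

lemma subset_monoid_gen: "S \<subseteq> monoid_gen S"
  unfolding monoid_gen_def by (auto intro!: image_eqI[of _ _ "[_]"])

lemma monoid_gen_least:
  assumes "0 \<in> M" "\<And>x y. x \<in> M \<Longrightarrow> y \<in> M \<Longrightarrow> x + y \<in> M" "S \<subseteq> M"
  shows "monoid_gen S \<subseteq> M"
proof
  fix x assume "x \<in> monoid_gen S"
  then obtain xs where "xs \<in> lists S" "x = sum_list xs" unfolding monoid_gen_def by blast
  then show "x \<in> M" using assms by (induction xs arbitrary: x) auto
qed

lemma monoid_gen_subset: "S \<subseteq> monoid_gen T \<Longrightarrow> monoid_gen S \<subseteq> monoid_gen T"
  by (rule monoid_gen_least) (simp_all add: zero_in_monoid_gen add_in_monoid_gen)

lemma monoid_gen_mono: "S \<subseteq> T \<Longrightarrow> monoid_gen S \<subseteq> monoid_gen T"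
  using monoid_gen_subset subset_monoid_gen by blast

lemma mult_in_monoid_gen:
  fixes c :: "'a::semiring_0"
  assumes "x \<in> monoid_gen S"
  shows "c * x \<in> monoid_gen ((*) c ` S)"
proof -
  obtain xs where "xs \<in> lists S" "x = sum_list xs"
    using assms unfolding monoid_gen_def by blast
  then show ?thesis
    unfolding monoid_gen_image by (auto simp: sum_list_const_mult)
qed

lemma sum_list_map_eq_sum_of_nat_count:
  fixes f :: "'a \<Rightarrow> 'b::semiring_1"
  assumes "set xs \<subseteq> A" "finite A"
  shows "sum_list (map f xs) = (\<Sum>a\<in>A. of_nat (count_list xs a) * f a)"
  using assms(1)
proof (induction xs)
  case (Cons x xs)
  have "(\<Sum>a\<in>A. of_nat (count_list (x # xs) a) * f a) =
        (\<Sum>a\<in>A. (if x = a then f a else 0) + of_nat (count_list xs a) * f a)"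
    by (intro sum.cong) (auto simp: distrib_right)
  also have "\<dots> = f x + (\<Sum>a\<in>A. of_nat (count_list xs a) * f a)"
    using Cons.prems assms(2) by (simp add: sum.distrib)
  finally show ?case
    using Cons by simp
qed simp

lemma monoid_gen_finite_eq:
  fixes f :: "'a \<Rightarrow> 'b::semiring_1"
  assumes "finite A"
  shows "monoid_gen (f ` A) = {\<Sum>a\<in>A. of_nat (c a) * f a | c. True}"
proof
  show "monoid_gen (f ` A) \<subseteq> {\<Sum>a\<in>A. of_nat (c a) * f a | c. True}"
  proof
    fix x assume "x \<in> monoid_gen (f ` A)"
    then obtain xs where "set xs \<subseteq> A" "x = sum_list (map f xs)"
      unfolding monoid_gen_image lists_eq_set by blast
    then have "x = (\<Sum>a\<in>A. of_nat (count_list xs a) * f a)"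
      using assms by (simp add: sum_list_map_eq_sum_of_nat_count)
    then show "x \<in> {\<Sum>a\<in>A. of_nat (c a) * f a | c. True}" by blast
  qed
  have "(\<Sum>a\<in>A. of_nat (c a) * f a) \<in> monoid_gen (f ` A)" for c
    using assms
  proof (induction A rule: finite_induct)
    case empty
    then show ?case by (simp add: zero_in_monoid_gen)
  next
    case (insert a A)
    have "of_nat (c a) * f a = sum_list (replicate (c a) (f a))"
      by (simp add: sum_list_replicate)
    also have "\<dots> \<in> monoid_gen (f ` insert a A)"
      unfolding monoid_gen_def by (intro imageI) auto
    finally have "of_nat (c a) * f a \<in> monoid_gen (f ` insert a A)" .
    moreover have "(\<Sum>a\<in>A. of_nat (c a) * f a) \<in> monoid_gen (f ` insert a A)"
      using insert.IH monoid_gen_mono[of "f ` A" "f ` insert a A"] by blast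
    ultimately show ?case
      using insert.hyps by (simp add: add_in_monoid_gen)
  qed
  then show "{\<Sum>a\<in>A. of_nat (c a) * f a | c. True} \<subseteq> monoid_gen (f ` A)" by blast
qed

lemma monoid_gen_powers_eq_lower_powers:
  fixes \<alpha> :: "'a::comm_semiring_1"
  assumes "\<alpha> ^ N \<in> monoid_gen (power \<alpha> ` {..<N})"
  shows "monoid_gen (range (power \<alpha>)) = monoid_gen (power \<alpha> ` {..<N})"
proof
  have "\<alpha> ^ j \<in> monoid_gen (power \<alpha> ` {..<N})" for j
  proof (induction j rule: less_induct)
    case (less j)
    show ?case
    proof (cases "j < N")
      case True
      then show ?thesis
        by (intro subset_monoid_gen[THEN subsetD] imageI) simp
    next
      case False
      have "\<alpha> ^ j = \<alpha> ^ (j - N) * \<alpha> ^ N"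
        using False by (simp add: power_add[symmetric])
      also have "\<dots> \<in> monoid_gen ((*) (\<alpha> ^ (j - N)) ` power \<alpha> ` {..<N})"
        using assms by (rule mult_in_monoid_gen)
      also have "\<dots> \<subseteq> monoid_gen (power \<alpha> ` {..<N})"
      proof (rule monoid_gen_subset, safe)
        fix i :: nat assume "i < N"
        then have "j - N + i < j"
          using False by simp
        then show "\<alpha> ^ (j - N) * \<alpha> ^ i \<in> monoid_gen (power \<alpha> ` {..<N})"
          using less.IH[of "j - N + i"] by (simp add: power_add)
      qed
      finally show ?thesis .
    qed
  qed
  then show "monoid_gen (range (power \<alpha>)) \<subseteq> monoid_gen (power \<alpha> ` {..<N})"
    by (intro monoid_gen_subset) auto
qed (intro monoid_gen_mono, auto)

lemma ex_power_in_monoid_gen_lower_powers: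
  fixes \<alpha> :: "'a::field"
  assumes "\<alpha> \<noteq> 0" "1 \<in> monoid_gen (power_int \<alpha> ` {k. k < 0})"
  shows "\<exists>N. \<alpha> ^ N \<in> monoid_gen (power \<alpha> ` {..<N})"
proof -
  obtain ks where neg: "\<forall>k\<in>set ks. k < 0" and one: "1 = sum_list (map (power_int \<alpha>) ks)"
    using assms(2) unfolding monoid_gen_image by auto
  define N where "N = sum_list (map (\<lambda>k. nat (- k)) ks)"
  have bound: "nat (- k) \<le> N" if "k \<in> set ks" for k
    unfolding N_def using that by (intro member_le_sum_list) auto
  have "\<alpha> ^ N = \<alpha> ^ N * sum_list (map (power_int \<alpha>) ks)"
    by (simp flip: one)
  also have "\<dots> = sum_list (map (\<lambda>k. \<alpha> ^ nat (int N + k)) ks)"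
    unfolding sum_list_const_mult[symmetric]
  proof (intro arg_cong[where f = sum_list] map_cong refl)
    fix k assume "k \<in> set ks"
    then have "0 \<le> int N + k"
      using bound by force
    then show "\<alpha> ^ N * \<alpha> powi k = \<alpha> ^ nat (int N + k)"
      using assms(1) by (simp add: power_int_add flip: power_int_of_nat)
  qed
  also have "\<dots> \<in> monoid_gen (power \<alpha> ` {..<N})"
    unfolding monoid_gen_image
  proof (rule image_eqI)
    show "map (\<lambda>k. nat (int N + k)) ks \<in> lists {..<N}"
      using neg bound by force
  qed (simp add: comp_def)
  finally show ?thesis ..
qed

lemma fin_generated_iff: "fin_generated M \<longleftrightarrow> (\<exists>G. finite G \<and> G \<subseteq> M \<and> M = monoid_gen G)"
proof -
  have "{\<Sum>g\<in>G. real (n g) * g | n. True} = monoid_gen G" if "finite G" for G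
    using monoid_gen_finite_eq[OF that, of "\<lambda>g. g"] by simp
  then show ?thesis
    unfolding fin_generated_def by (simp cong: conj_cong)
qed

section \<open>Atoms\<close>

lemma atom_subset: "atom N x \<Longrightarrow> M \<subseteq> N \<Longrightarrow> x \<in> M \<Longrightarrow> atom M x"
  unfolding atom_def by blast

lemma atom_mem_summands:
  assumes "atom (monoid_gen S) x" "set xs \<subseteq> monoid_gen S" "sum_list xs = x"
  shows "x \<in> set xs"
  using assms(2,3)
proof (induction xs)
  case Nil
  then show ?case using assms(1) by (simp add: atom_def)
next
  case (Cons y ys)
  have "y \<in> monoid_gen S" "sum_list ys \<in> monoid_gen S"
    using Cons.prems(1) by (auto intro: sum_list_in_monoid_gen)
  then have "y = 0 \<or> sum_list ys = 0"
    using assms(1) Cons.prems(2) unfolding atom_def by auto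
  then show ?case using Cons by auto
qed

lemma atom_monoid_gen_mem_generators: "atom (monoid_gen S) x \<Longrightarrow> x \<in> S"
proof -
  assume atom: "atom (monoid_gen S) x"
  then obtain xs where "xs \<in> lists S" "sum_list xs = x"
    unfolding atom_def monoid_gen_def by blast
  with atom show "x \<in> S"
    using atom_mem_summands[of S x xs] subset_monoid_gen[of S] by blast
qed

lemma atom_mult_invertible:
  fixes c d :: "'a::comm_semiring_1"
  assumes "\<And>y. y \<in> M \<Longrightarrow> c * y \<in> M" "\<And>y. y \<in> M \<Longrightarrow> d * y \<in> M" "d * c = 1"
    and "atom M x"
  shows "atom M (c * x)"
proof -
  have cancel: "d * (c * y) = y" "c * (d * y) = y" for y
    using assms(3) by (simp_all add: mult.assoc[symmetric] mult.commute[of c d])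
  have x: "x \<in> M" "x \<noteq> 0" using assms(4) by (auto simp: atom_def)
  have "\<not> (b \<in> M \<and> b' \<in> M \<and> b \<noteq> 0 \<and> b' \<noteq> 0 \<and> c * x = b + b')" for b b'
  proof
    assume decomp: "b \<in> M \<and> b' \<in> M \<and> b \<noteq> 0 \<and> b' \<noteq> 0 \<and> c * x = b + b'"
    then have "x = d * b + d * b'"
      using cancel[of x] by (simp add: distrib_left)
    moreover have "d * b \<noteq> 0" "d * b' \<noteq> 0"
      using decomp cancel(2) by (metis mult_zero_right)+
    ultimately show False
      using assms(2,4) decomp unfolding atom_def by blast
  qed
  moreover have "c * x \<noteq> 0"
    using cancel[of x] x by auto
  ultimately show ?thesis
    using assms(1) x unfolding atom_def by blast
qed

section \<open>The monoids M_\<alpha> and N_0[\<alpha>]\<close>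

lemma laurent_eval_monoid_eq: "laurent_eval_monoid \<alpha> = monoid_gen (range (power_int \<alpha>))"
proof
  show "laurent_eval_monoid \<alpha> \<subseteq> monoid_gen (range (power_int \<alpha>))"
  proof
    fix x assume "x \<in> laurent_eval_monoid \<alpha>"
    then obtain S c where "finite S" "x = (\<Sum>i\<in>S. real (c i) * \<alpha> powi i)"
      unfolding laurent_eval_monoid_def by blast
    then have "x \<in> monoid_gen (power_int \<alpha> ` S)"
      by (auto simp: monoid_gen_finite_eq)
    then show "x \<in> monoid_gen (range (power_int \<alpha>))"
      using monoid_gen_mono[of "power_int \<alpha> ` S"] by blast
  qed
  show "monoid_gen (range (power_int \<alpha>)) \<subseteq> laurent_eval_monoid \<alpha>"
  proof
    fix x assume "x \<in> monoid_gen (range (power_int \<alpha>))"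
    then obtain ks where "x = sum_list (map (power_int \<alpha>) ks)"
      unfolding monoid_gen_image by blast
    then have "x \<in> monoid_gen (power_int \<alpha> ` set ks)"
      unfolding monoid_gen_image by (auto simp: lists_eq_set)
    then obtain c where "x = (\<Sum>i\<in>set ks. real (c i) * \<alpha> powi i)"
      by (auto simp: monoid_gen_finite_eq)
    then show "x \<in> laurent_eval_monoid \<alpha>"
      unfolding laurent_eval_monoid_def by blast
  qed
qed

lemma poly_eval_monoid_eq: "poly_eval_monoid \<alpha> = monoid_gen (range (power \<alpha>))"
proof
  show "poly_eval_monoid \<alpha> \<subseteq> monoid_gen (range (power \<alpha>))"
  proof
    fix x assume "x \<in> poly_eval_monoid \<alpha>"
    then obtain p :: "nat poly" where "x = poly (map_poly real p) \<alpha>"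
      unfolding poly_eval_monoid_def by blast
    also have "\<dots> = (\<Sum>i\<le>degree p. real (coeff p i) * \<alpha> ^ i)"
      by (simp add: poly_altdef degree_map_poly coeff_map_poly)
    also have "\<dots> \<in> monoid_gen (power \<alpha> ` {..degree p})"
      by (auto simp: monoid_gen_finite_eq)
    finally show "x \<in> monoid_gen (range (power \<alpha>))"
      using monoid_gen_mono[of "power \<alpha> ` {..degree p}"] by blast
  qed
  have map_poly_add: "map_poly real (p + q) = map_poly real p + map_poly real q" for p q
    by (rule poly_eqI) (simp add: coeff_map_poly)
  show "monoid_gen (range (power \<alpha>)) \<subseteq> poly_eval_monoid \<alpha>"
  proof (rule monoid_gen_least)
    show "0 \<in> poly_eval_monoid \<alpha>"
      unfolding poly_eval_monoid_def by (auto intro!: exI[of _ 0])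
    show "x + y \<in> poly_eval_monoid \<alpha>" if xy: "x \<in> poly_eval_monoid \<alpha>" "y \<in> poly_eval_monoid \<alpha>" for x y
    proof -
      obtain p q :: "nat poly" where "x = poly (map_poly real p) \<alpha>" "y = poly (map_poly real q) \<alpha>"
        using xy unfolding poly_eval_monoid_def by blast
      then have "x + y = poly (map_poly real (p + q)) \<alpha>"
        by (simp add: map_poly_add)
      then show ?thesis
        unfolding poly_eval_monoid_def by blast
    qed
    show "range (power \<alpha>) \<subseteq> poly_eval_monoid \<alpha>"
    proof safe
      fix n :: nat
      have "\<alpha> ^ n = poly (map_poly real (monom 1 n)) \<alpha>"
        by (simp add: map_poly_monom poly_monom)
      then show "\<alpha> ^ n \<in> poly_eval_monoid \<alpha>"
        unfolding poly_eval_monoid_def by blast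
    qed
  qed
qed

lemma one_in_poly_eval_monoid: "1 \<in> poly_eval_monoid \<alpha>"
  unfolding poly_eval_monoid_eq using subset_monoid_gen[of "range (power \<alpha>)"]
  by (metis power_0 rangeI subsetD)

lemma poly_eval_monoid_subset: "poly_eval_monoid \<alpha> \<subseteq> laurent_eval_monoid \<alpha>"
  unfolding poly_eval_monoid_eq laurent_eval_monoid_eq
  by (intro monoid_gen_mono image_subsetI) (metis power_int_of_nat rangeI)

lemma one_in_laurent_eval_monoid: "1 \<in> laurent_eval_monoid \<alpha>"
  using one_in_poly_eval_monoid poly_eval_monoid_subset by blast

lemma poly_eval_monoid_mult_power:
  assumes "x \<in> poly_eval_monoid \<alpha>"
  shows "\<alpha> ^ j * x \<in> poly_eval_monoid \<alpha>"
proof -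
  have "(*) (\<alpha> ^ j) ` range (power \<alpha>) \<subseteq> range (power \<alpha>)"
    by (auto simp flip: power_add)
  then show ?thesis
    using assms mult_in_monoid_gen monoid_gen_mono unfolding poly_eval_monoid_eq by blast
qed

lemma laurent_eval_monoid_mult_power_int:
  assumes "\<alpha> \<noteq> 0" "x \<in> laurent_eval_monoid \<alpha>"
  shows "\<alpha> powi j * x \<in> laurent_eval_monoid \<alpha>"
proof -
  have "\<alpha> powi j * \<alpha> powi k = \<alpha> powi (j + k)" for k
    using assms(1) by (simp add: power_int_add)
  then have "(*) (\<alpha> powi j) ` range (power_int \<alpha>) \<subseteq> range (power_int \<alpha>)"
    by auto
  then show ?thesis
    using assms(2) mult_in_monoid_gen monoid_gen_mono unfolding laurent_eval_monoid_eq by blast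
qed

lemma atom_laurent_eval_monoid_mult:
  assumes "\<alpha> \<noteq> 0" "atom (laurent_eval_monoid \<alpha>) x"
  shows "atom (laurent_eval_monoid \<alpha>) (\<alpha> powi j * x)"
proof (rule atom_mult_invertible[where d = "\<alpha> powi - j"])
  show "\<alpha> powi - j * \<alpha> powi j = 1"
    using assms(1) by (simp flip: power_int_add)
qed (use assms laurent_eval_monoid_mult_power_int in auto)

lemma atomic_laurent_eval_monoid_iff:
  assumes "\<alpha> \<noteq> 0"
  shows "atomic_monoid (laurent_eval_monoid \<alpha>) \<longleftrightarrow> atom (laurent_eval_monoid \<alpha>) 1"
proof
  assume atomic: "atomic_monoid (laurent_eval_monoid \<alpha>)"
  have "\<exists>xs. (\<forall>y\<in>set xs. atom (laurent_eval_monoid \<alpha>) y) \<and> sum_list xs = 1"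
    using atomic one_in_laurent_eval_monoid[of \<alpha>] unfolding atomic_monoid_def by simp
  then obtain xs where atoms: "\<forall>y\<in>set xs. atom (laurent_eval_monoid \<alpha>) y" and "sum_list xs = 1"
    by blast
  then obtain y where "y \<in> set xs"
    by (cases xs) auto
  with atoms have y: "atom (laurent_eval_monoid \<alpha>) y"
    by blast
  then obtain k where "y = \<alpha> powi k"
    using atom_monoid_gen_mem_generators unfolding laurent_eval_monoid_eq by blast
  with assms have "\<alpha> powi - k * y = 1"
    by (simp flip: power_int_add)
  then show "atom (laurent_eval_monoid \<alpha>) 1"
    using atom_laurent_eval_monoid_mult[OF assms y, of "- k"] by simp
next
  assume one: "atom (laurent_eval_monoid \<alpha>) 1"
  show "atomic_monoid (laurent_eval_monoid \<alpha>)"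
    unfolding atomic_monoid_def
  proof (intro ballI impI)
    fix x assume "x \<in> laurent_eval_monoid \<alpha>"
    then obtain ks where "x = sum_list (map (power_int \<alpha>) ks)"
      unfolding laurent_eval_monoid_eq monoid_gen_image by blast
    moreover have "atom (laurent_eval_monoid \<alpha>) (\<alpha> powi k)" for k
      using atom_laurent_eval_monoid_mult[OF assms one, of k] by simp
    ultimately show "\<exists>xs. (\<forall>a\<in>set xs. atom (laurent_eval_monoid \<alpha>) a) \<and> sum_list xs = x"
      by (intro exI[of _ "map (power_int \<alpha>) ks"]) auto
  qed
qed

lemma antimatter_poly_eval_monoid_iff:
  assumes "\<alpha> \<noteq> 0"
  shows "antimatter (poly_eval_monoid \<alpha>) \<longleftrightarrow> \<not> atom (poly_eval_monoid \<alpha>) 1"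
proof
  assume "\<not> atom (poly_eval_monoid \<alpha>) 1"
  then obtain b c where bc: "b \<in> poly_eval_monoid \<alpha>" "c \<in> poly_eval_monoid \<alpha>" "b \<noteq> 0" "c \<noteq> 0"
    and "1 = b + c"
    using one_in_poly_eval_monoid unfolding atom_def by auto
  have "\<not> atom (poly_eval_monoid \<alpha>) x" for x
  proof
    assume x: "atom (poly_eval_monoid \<alpha>) x"
    then obtain j where "x = \<alpha> ^ j"
      using atom_monoid_gen_mem_generators unfolding poly_eval_monoid_eq by blast
    with \<open>1 = b + c\<close> have "x = \<alpha> ^ j * b + \<alpha> ^ j * c"
      by (simp flip: distrib_left)
    moreover have "\<alpha> ^ j * b \<noteq> 0" "\<alpha> ^ j * c \<noteq> 0"
      using assms bc by auto
    ultimately show False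
      using x bc poly_eval_monoid_mult_power unfolding atom_def by blast
  qed
  then show "antimatter (poly_eval_monoid \<alpha>)"
    unfolding antimatter_def by blast
qed (auto simp: antimatter_def)

lemma laurent_eval_monoid_nonneg:
  "\<alpha> > 0 \<Longrightarrow> x \<in> laurent_eval_monoid \<alpha> \<Longrightarrow> 0 \<le> x"
  unfolding laurent_eval_monoid_eq monoid_gen_image by (auto intro!: sum_list_nonneg)

lemma laurent_eval_monoid_lt_one:
  assumes "\<alpha> > 0" "x \<in> laurent_eval_monoid \<alpha>" "x < 1"
  shows "x \<in> monoid_gen (power_int \<alpha> ` {k. \<alpha> powi k < 1})"
proof -
  obtain ks where x: "x = sum_list (map (power_int \<alpha>) ks)"
    using assms(2) unfolding laurent_eval_monoid_eq monoid_gen_image by blast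
  have "\<alpha> powi k \<le> x" if "k \<in> set ks" for k
    unfolding x using that assms(1) by (intro member_le_sum_list) auto
  then have "ks \<in> lists {k. \<alpha> powi k < 1}"
    using assms(3) by fastforce
  then show ?thesis
    unfolding x monoid_gen_image by blast
qed

lemma not_atom_one_laurent_eval_monoidE:
  assumes "\<alpha> > 0" "\<not> atom (laurent_eval_monoid \<alpha>) 1"
  obtains b c where "b \<in> monoid_gen (power_int \<alpha> ` {k. \<alpha> powi k < 1})"
    "c \<in> monoid_gen (power_int \<alpha> ` {k. \<alpha> powi k < 1})" "b \<noteq> 0" "c \<noteq> 0" "b + c = 1"
proof -
  obtain b c where bc: "b \<in> laurent_eval_monoid \<alpha>" "c \<in> laurent_eval_monoid \<alpha>" "b \<noteq> 0" "c \<noteq> 0"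
    and "1 = b + c"
    using assms(2) one_in_laurent_eval_monoid unfolding atom_def by auto
  moreover have "0 \<le> b" "0 \<le> c"
    using bc(1,2) laurent_eval_monoid_nonneg assms(1) by auto
  ultimately have "b < 1" "c < 1"
    by auto
  then show thesis
    using that[OF laurent_eval_monoid_lt_one[OF assms(1) bc(1)] laurent_eval_monoid_lt_one[OF assms(1) bc(2)]]
      bc(3,4) \<open>1 = b + c\<close> by simp
qed

lemma not_atom_one_poly_eval_monoid_if_lt_one:
  assumes "0 < \<alpha>" "\<alpha> < 1" "\<not> atom (laurent_eval_monoid \<alpha>) 1"
  shows "\<not> atom (poly_eval_monoid \<alpha>) 1"
proof -
  have "power_int \<alpha> ` {k. \<alpha> powi k < 1} \<subseteq> range (power \<alpha>)"
  proof safe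
    fix k assume "\<alpha> powi k < 1"
    moreover have "1 \<le> \<alpha> powi k" if "k \<le> 0"
      using power_int_decreasing[OF that, of \<alpha>] assms(1,2) by simp
    ultimately have "0 \<le> k"
      by linarith
    then show "\<alpha> powi k \<in> range (power \<alpha>)"
      by (metis nonneg_int_cases power_int_of_nat rangeI)
  qed
  then have gen: "monoid_gen (power_int \<alpha> ` {k. \<alpha> powi k < 1}) \<subseteq> poly_eval_monoid \<alpha>"
    unfolding poly_eval_monoid_eq by (rule monoid_gen_mono)
  obtain b c where "b \<in> poly_eval_monoid \<alpha>" "c \<in> poly_eval_monoid \<alpha>" "b \<noteq> 0" "c \<noteq> 0" "b + c = 1"
    using not_atom_one_laurent_eval_monoidE[OF assms(1,3)] gen by (metis subsetD)
  then show ?thesis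
    unfolding atom_def by auto
qed

lemma fin_generated_poly_eval_monoid_if_gt_one:
  assumes "1 < \<alpha>" "\<not> atom (laurent_eval_monoid \<alpha>) 1"
  shows "fin_generated (poly_eval_monoid \<alpha>)"
proof -
  have "0 < \<alpha>"
    using assms(1) by simp
  then obtain b c where bc: "b \<in> monoid_gen (power_int \<alpha> ` {k. \<alpha> powi k < 1})"
    "c \<in> monoid_gen (power_int \<alpha> ` {k. \<alpha> powi k < 1})" "b \<noteq> 0" "c \<noteq> 0" "b + c = 1"
    using assms(2) by (rule not_atom_one_laurent_eval_monoidE)
  have "{k. \<alpha> powi k < 1} \<subseteq> {k. k < 0}"
    using power_int_le_imp_less_exp[OF assms(1), of _ 0] by auto
  then have "monoid_gen (power_int \<alpha> ` {k. \<alpha> powi k < 1}) \<subseteq> monoid_gen (power_int \<alpha> ` {k. k < 0})"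
    by (intro monoid_gen_mono image_mono)
  moreover have "1 \<in> monoid_gen (power_int \<alpha> ` {k. \<alpha> powi k < 1})"
    using add_in_monoid_gen[OF bc(1,2)] bc(5) by simp
  ultimately have "1 \<in> monoid_gen (power_int \<alpha> ` {k. k < 0})"
    by (rule subsetD)
  with \<open>0 < \<alpha>\<close> obtain N where "\<alpha> ^ N \<in> monoid_gen (power \<alpha> ` {..<N})"
    using ex_power_in_monoid_gen_lower_powers[of \<alpha>] by auto
  then have "poly_eval_monoid \<alpha> = monoid_gen (power \<alpha> ` {..<N})"
    unfolding poly_eval_monoid_eq by (rule monoid_gen_powers_eq_lower_powers)
  then show ?thesis
    unfolding fin_generated_iff using subset_monoid_gen[of "power \<alpha> ` {..<N}"] by blast
qed

lemma not_atom_one_laurent_eval_monoid_if_fin_generated: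
  assumes "0 < \<alpha>" "\<alpha> \<noteq> 1" "fin_generated (poly_eval_monoid \<alpha>)"
  shows "\<not> atom (laurent_eval_monoid \<alpha>) 1"
proof
  assume one: "atom (laurent_eval_monoid \<alpha>) 1"
  obtain G where G: "finite G" "G \<subseteq> poly_eval_monoid \<alpha>" "poly_eval_monoid \<alpha> = monoid_gen G"
    using assms(3) unfolding fin_generated_iff by blast
  have "\<alpha> ^ n \<in> G" for n
  proof -
    have "\<alpha> ^ n \<in> poly_eval_monoid \<alpha>"
      using poly_eval_monoid_mult_power[OF one_in_poly_eval_monoid[of \<alpha>], of n] by simp
    then have "\<alpha> ^ n \<in> monoid_gen G"
      using G(3) by simp
    then obtain xs where "xs \<in> lists G" "\<alpha> ^ n = sum_list xs"
      unfolding monoid_gen_def by (rule imageE)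
    then have xs: "set xs \<subseteq> G" "sum_list xs = \<alpha> ^ n"
      by (auto simp: lists_eq_set)
    have "atom (laurent_eval_monoid \<alpha>) (\<alpha> ^ n)"
      using atom_laurent_eval_monoid_mult[of \<alpha> 1 "int n"] one assms(1) by simp
    moreover have "set xs \<subseteq> laurent_eval_monoid \<alpha>"
      using xs(1) G(2) poly_eval_monoid_subset by blast
    ultimately have "\<alpha> ^ n \<in> set xs"
      using xs(2) unfolding laurent_eval_monoid_eq by (rule atom_mem_summands)
    then show ?thesis
      using xs(1) by blast
  qed
  then have "range (power \<alpha>) \<subseteq> G"
    by blast
  then have "finite (range (power \<alpha>))"
    using G(1) by (rule finite_subset)
  moreover have "inj (power \<alpha>)"
    by (rule injI) (simp add: power_inject_exp'[OF assms(2,1)])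
  ultimately show False
    by (metis finite_imageD infinite_UNIV_nat)
qed

lemma not_atom_one_laurent_eval_monoid_if_antimatter:
  assumes "\<alpha> \<noteq> 0" "antimatter (poly_eval_monoid \<alpha>)"
  shows "\<not> atom (laurent_eval_monoid \<alpha>) 1"
  using atom_subset[OF _ poly_eval_monoid_subset one_in_poly_eval_monoid]
    antimatter_poly_eval_monoid_iff[OF assms(1)] assms(2) by auto

theorem proposition3p4:
  fixes \<alpha> :: real
  assumes "\<alpha> > 0" and "\<alpha> \<noteq> 1"
  shows "\<not> atomic_monoid (laurent_eval_monoid \<alpha>) \<longleftrightarrow>
           (antimatter (poly_eval_monoid \<alpha>) \<or> fin_generated (poly_eval_monoid \<alpha>))"
proof -
  have "\<alpha> \<noteq> 0"
    using assms(1) by simp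
  have "antimatter (poly_eval_monoid \<alpha>) \<or> fin_generated (poly_eval_monoid \<alpha>)"
    if "\<not> atom (laurent_eval_monoid \<alpha>) 1"
  proof (cases "\<alpha> < 1")
    case True
    then show ?thesis
      using not_atom_one_poly_eval_monoid_if_lt_one[OF assms(1) True that]
        antimatter_poly_eval_monoid_iff[OF \<open>\<alpha> \<noteq> 0\<close>] by simp
  next
    case False
    with assms(2) have "1 < \<alpha>"
      by simp
    then show ?thesis
      using fin_generated_poly_eval_monoid_if_gt_one that by simp
  qed
  moreover note not_atom_one_laurent_eval_monoid_if_antimatter[OF \<open>\<alpha> \<noteq> 0\<close>]
    not_atom_one_laurent_eval_monoid_if_fin_generated[OF assms]
  ultimately show ?thesis
    using atomic_laurent_eval_monoid_iff[OF \<open>\<alpha> \<noteq> 0\<close>] by blast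
qed

end
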